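(* Let $K$ be an infinite field containing $\mathbb{F}_q$, let $B\in\mathrm{GL}_n(K)$, and let $N\in\mathrm{GL}_n(K)$ be such that $N^{-1}BN^{(q)}=\Delta$, where $\Delta$ is the matrix with $1$'s on the subdiagonal, last column $(a_0,a_1,\dots,a_{n-1})^T$ and all other entries $0$. Then the splitting fields over $K$ of the systems $BX^{(q)}=X$ and $\Delta^*X^{(q)}=X$ coincide, where $\Delta^*=(\Delta^{-1})^T$.
   Context: $X^{(q)}$, $N^{(q)}$ denote entrywise $q$-th powers. The splitting field over $K$ of $CX^{(q)}=X$ is the subfield of $K_{\mathrm{sep}}$ generated over $K$ by the coordinates of all its solutions in $K_{\mathrm{sep}}^n$. (Such $N$ exists since Frobenius modules over infinite fields are cyclic.) *)

theory Defs
  imports "Jordan_Normal_Form.Matrix" "HOL-Computational_Algebra.Polynomial"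
begin

definition is_subfield :: "'a::field set \<Rightarrow> bool" where
  "is_subfield F \<longleftrightarrow> 0 \<in> F \<and> 1 \<in> F \<and>
     (\<forall>x\<in>F. \<forall>y\<in>F. x + y \<in> F \<and> x - y \<in> F \<and> x * y \<in> F) \<and>
     (\<forall>x\<in>F. inverse x \<in> F)"

definition gen_field :: "'a::field set \<Rightarrow> 'a set \<Rightarrow> 'a set" where
  "gen_field F S = \<Inter> {E. is_subfield E \<and> F \<union> S \<subseteq> E}"

definition alg_closed :: "'a::field itself \<Rightarrow> bool" where
  "alg_closed _ \<longleftrightarrow> (\<forall>p::'a poly. degree p \<ge> 1 \<longrightarrow> (\<exists>x. poly p x = 0))"

definition mat_inv :: "'a::field mat \<Rightarrow> 'a mat" where
  "mat_inv A = (THE B. B \<in> carrier_mat (dim_row A) (dim_row A) \<and> inverts_mat A B \<and> inverts_mat B A)"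

definition qpow_mat :: "nat \<Rightarrow> 'a::field mat \<Rightarrow> 'a mat" where
  "qpow_mat q M = map_mat (\<lambda>x. x ^ q) M"

definition qpow_vec :: "nat \<Rightarrow> 'a::field vec \<Rightarrow> 'a vec" where
  "qpow_vec q X = map_vec (\<lambda>x. x ^ q) X"

definition Delta_mat :: "nat \<Rightarrow> (nat \<Rightarrow> 'a::field) \<Rightarrow> 'a mat" where
  "Delta_mat n a = mat n n (\<lambda>(i,j). if j = n - 1 then a i else if i = j + 1 then 1 else 0)"

definition dual_mat :: "'a::field mat \<Rightarrow> 'a mat" where
  "dual_mat A = transpose_mat (mat_inv A)"

definition frob_solutions :: "nat \<Rightarrow> nat \<Rightarrow> 'a::field mat \<Rightarrow> 'a vec set" where
  "frob_solutions q n C = {X. X \<in> carrier_vec n \<and> C *\<^sub>v qpow_vec q X = X}"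

(* splitting field over K (inside the ambient algebraically closed field) *)
definition frob_splitting_field :: "'a::field set \<Rightarrow> nat \<Rightarrow> nat \<Rightarrow> 'a mat \<Rightarrow> 'a set" where
  "frob_splitting_field K q n C = gen_field K (\<Union>X\<in>frob_solutions q n C. set\<^sub>v X)"

end

theory Submission
  imports Defs "Jordan_Normal_Form.Determinant"
begin

text \<open>If T B = D T^(q), then
  X \<mapsto> T X maps solutions for B to solutions for D; with T = N^(-1), whose entries lie in K, this
  identifies the splitting fields of B and Delta. If P is an invertible fundamental matrix of C,
  i.e. C P^(q) = P, then every solution is P c with c^(q) = c, so c has entries in F_q \<subseteq> K and the
  splitting field is generated over K by the entries of P; moreover (P^(-1))^T is a fundamental
  matrix of the dual system. Since a_0 \<noteq> 0, the q-polynomial x^(q^n) - \<Sum> a_l x^(q^l) is separable,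
  so it has q^n roots, enough to choose z_0, ..., z_(n-1) with invertible Moore matrix (z_j^(q^i)).
  This Moore matrix is a fundamental matrix of Delta^*, its dual one of Delta, so both splitting
  fields are generated over K by its entries.\<close>

lemma is_subfieldD:
  assumes "is_subfield E"
  shows is_subfield_zero: "0 \<in> E" and is_subfield_one: "1 \<in> E"
    and is_subfield_add: "x \<in> E \<Longrightarrow> y \<in> E \<Longrightarrow> x + y \<in> E"
    and is_subfield_diff: "x \<in> E \<Longrightarrow> y \<in> E \<Longrightarrow> x - y \<in> E"
    and is_subfield_mult: "x \<in> E \<Longrightarrow> y \<in> E \<Longrightarrow> x * y \<in> E"
    and is_subfield_inverse: "x \<in> E \<Longrightarrow> inverse x \<in> E"
  using assms unfolding is_subfield_def by auto

lemma is_subfield_uminus: "is_subfield E \<Longrightarrow> x \<in> E \<Longrightarrow> - x \<in> E"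
  using is_subfield_diff[of E 0 x] is_subfield_zero[of E] by simp

lemma is_subfield_power: "is_subfield E \<Longrightarrow> x \<in> E \<Longrightarrow> x ^ m \<in> E"
  by (induction m) (auto intro: is_subfield_one is_subfield_mult)

lemma is_subfield_sum: "is_subfield E \<Longrightarrow> (\<And>i. i \<in> A \<Longrightarrow> f i \<in> E) \<Longrightarrow> sum f A \<in> E"
  by (induction A rule: infinite_finite_induct) (auto intro: is_subfield_zero is_subfield_add)

lemma is_subfield_prod: "is_subfield E \<Longrightarrow> (\<And>i. i \<in> A \<Longrightarrow> f i \<in> E) \<Longrightarrow> prod f A \<in> E"
  by (induction A rule: infinite_finite_induct) (auto intro: is_subfield_one is_subfield_mult)

lemma gen_field_is_subfield: "is_subfield (gen_field K S)"
  unfolding gen_field_def is_subfield_def by blast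

lemma gen_field_upper: "K \<union> S \<subseteq> gen_field K S"
  unfolding gen_field_def by blast

lemma gen_field_least: "is_subfield E \<Longrightarrow> K \<union> S \<subseteq> E \<Longrightarrow> gen_field K S \<subseteq> E"
  unfolding gen_field_def by blast

lemma gen_field_eqI:
  assumes "S \<subseteq> gen_field K T" and "T \<subseteq> gen_field K S"
  shows "gen_field K S = gen_field K T"
  using gen_field_least[OF gen_field_is_subfield, of K S K T] gen_field_least[OF gen_field_is_subfield, of K T K S]
    gen_field_upper[of K S] gen_field_upper[of K T] assms by blast

lemma elements_mat_subsetI:
  "A \<in> carrier_mat nr nc \<Longrightarrow> (\<And>i j. i < nr \<Longrightarrow> j < nc \<Longrightarrow> A $$ (i,j) \<in> E) \<Longrightarrow> elements_mat A \<subseteq> E"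
  unfolding carrier_mat_def by auto

lemma elements_mat_transpose: "elements_mat (transpose_mat A) = elements_mat A"
proof -
  have "x \<in> elements_mat A" if x: "x \<in> elements_mat (transpose_mat A)" for x and A :: "'a mat"
  proof -
    obtain i j where "i < dim_col A" "j < dim_row A" "x = A $$ (j,i)"
      using elements_matD[OF x] by auto
    then show ?thesis by (intro elements_matI[of A "dim_row A" "dim_col A" j i]) auto
  qed
  from this[of _ A] this[of _ "transpose_mat A"] show ?thesis by auto
qed

lemma is_subfield_det:
  assumes E: "is_subfield E" and A: "A \<in> carrier_mat n n" and AE: "elements_mat A \<subseteq> E"
  shows "det A \<in> E"
proof -
  have "signof p * (\<Prod>i = 0..<n. A $$ (i, p i)) \<in> E" if "p permutes {0..<n}" for p
  proof -
    have "signof p \<in> E"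
      using is_subfield_one[OF E] is_subfield_uminus[OF E is_subfield_one[OF E]] by (auto simp: sign_def)
    moreover have "(\<Prod>i = 0..<n. A $$ (i, p i)) \<in> E"
      using AE A permutes_in_image[OF that] by (intro is_subfield_prod[OF E]) auto
    ultimately show ?thesis using is_subfield_mult[OF E] by blast
  qed
  then show ?thesis unfolding det_def'[OF A] by (intro is_subfield_sum[OF E]) simp
qed

lemma is_subfield_cofactor:
  assumes E: "is_subfield E" and A: "A \<in> carrier_mat n n" and AE: "elements_mat A \<subseteq> E"
  shows "cofactor A i j \<in> E"
proof -
  have "A $$ (r,c) \<in> E" if "r < n" "c < n" for r c
    using AE A that by blast
  then have "elements_mat (mat_delete A i j) \<subseteq> E"
    by (intro elements_mat_subsetI[OF mat_delete_carrier[OF A]]) (use A in \<open>auto simp: mat_delete_def\<close>)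
  then have "det (mat_delete A i j) \<in> E" by (rule is_subfield_det[OF E mat_delete_carrier[OF A]])
  moreover have "(-1) ^ (i + j) \<in> E"
    by (intro is_subfield_power[OF E] is_subfield_uminus[OF E] is_subfield_one[OF E])
  ultimately show ?thesis unfolding cofactor_def using is_subfield_mult[OF E] by blast
qed

lemma is_subfield_mult_mat_vec:
  assumes E: "is_subfield E" and A: "A \<in> carrier_mat n m" and v: "v \<in> carrier_vec m"
    and AE: "elements_mat A \<subseteq> E" and vE: "set\<^sub>v v \<subseteq> E"
  shows "set\<^sub>v (A *\<^sub>v v) \<subseteq> E"
proof
  fix x assume "x \<in> set\<^sub>v (A *\<^sub>v v)"
  then obtain i where i: "i < n" and x: "x = (A *\<^sub>v v) $ i"
    using A by (auto simp: vec_set_def)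
  have "A $$ (i,l) * v $ l \<in> E" if "l < m" for l
  proof (rule is_subfield_mult[OF E])
    show "A $$ (i,l) \<in> E" using AE A i that by blast
    show "v $ l \<in> E" using vE v that by (auto simp: vec_set_def)
  qed
  then have "(\<Sum>l = 0..<m. A $$ (i,l) * v $ l) \<in> E" by (intro is_subfield_sum[OF E]) simp
  then show "x \<in> E" using A v i by (simp add: x scalar_prod_def)
qed

lemma mat_inv_eqI:
  fixes A B :: "'a::field mat"
  assumes A: "A \<in> carrier_mat n n" and B: "B \<in> carrier_mat n n" and AB: "A * B = 1\<^sub>m n"
  shows "mat_inv A = B"
  unfolding mat_inv_def
proof (rule the_equality)
  have "B * A = 1\<^sub>m n" by (rule mat_mult_left_right_inverse[OF A B AB])
  then show "B \<in> carrier_mat (dim_row A) (dim_row A) \<and> inverts_mat A B \<and> inverts_mat B A"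
    using A B AB by (auto simp: inverts_mat_def)
next
  fix B' assume "B' \<in> carrier_mat (dim_row A) (dim_row A) \<and> inverts_mat A B' \<and> inverts_mat B' A"
  then have B': "B' \<in> carrier_mat n n" and "B' * A = 1\<^sub>m n" using A by (auto simp: inverts_mat_def)
  have "B' = B' * (A * B)" using B' AB by simp
  also have "\<dots> = (B' * A) * B" using B' A B by simp
  also have "\<dots> = B" using \<open>B' * A = 1\<^sub>m n\<close> B by simp
  finally show "B' = B" .
qed

lemma mult_mat_inverse_cancel:
  assumes "A \<in> carrier_mat n n" "B \<in> carrier_mat n n" "C \<in> carrier_mat n m" "A * B = 1\<^sub>m n"
  shows "A * (B * C) = (C :: 'a::semiring_1 mat)"
  using assms assoc_mult_mat[of A n n B n C m] by simp

lemma invertible_matI: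
  fixes A B :: "'a::field mat"
  assumes A: "A \<in> carrier_mat n n" and B: "B \<in> carrier_mat n n" and AB: "A * B = 1\<^sub>m n"
  shows "invertible_mat A"
  using A B AB mat_mult_left_right_inverse[OF A B AB]
  unfolding invertible_mat_def inverts_mat_def square_mat.simps by auto

lemma invertible_mat_det:
  fixes A :: "'a::field mat"
  assumes A: "A \<in> carrier_mat n n" and "det A \<noteq> 0"
  shows "invertible_mat A"
proof -
  obtain B where "B \<in> carrier_mat n n" "A * B = 1\<^sub>m n"
    using det_non_zero_imp_unit[OF assms, of "()"] unfolding Units_def ring_mat_def by auto
  then show ?thesis by (rule invertible_matI[OF A])
qed

lemma mat_inv:
  fixes A :: "'a::field mat"
  assumes A: "A \<in> carrier_mat n n" and "invertible_mat A"
  shows mat_inv_carrier: "mat_inv A \<in> carrier_mat n n"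
    and mat_inv_right: "A * mat_inv A = 1\<^sub>m n"
    and mat_inv_left: "mat_inv A * A = 1\<^sub>m n"
proof -
  obtain B where "inverts_mat A B" "inverts_mat B A"
    using assms unfolding invertible_mat_def by auto
  then have AB: "A * B = 1\<^sub>m n" and "B * A = 1\<^sub>m (dim_row B)"
    using A by (auto simp: inverts_mat_def)
  then have B: "B \<in> carrier_mat n n"
    using A by (metis carrier_matD(2) carrier_matI index_mult_mat(3) index_one_mat(3))
  have "mat_inv A = B" by (rule mat_inv_eqI[OF A B AB])
  then show "mat_inv A \<in> carrier_mat n n" "A * mat_inv A = 1\<^sub>m n" "mat_inv A * A = 1\<^sub>m n"
    using B AB mat_mult_left_right_inverse[OF A B AB] by auto
qed

lemma invertible_mat_inv:
  fixes A :: "'a::field mat"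
  assumes A: "A \<in> carrier_mat n n" and "invertible_mat A"
  shows "invertible_mat (mat_inv A)" and "mat_inv (mat_inv A) = A"
  using mat_inv[OF assms] invertible_matI[OF _ A] mat_inv_eqI[OF _ A] by auto

lemma invertible_dual_mat:
  fixes A :: "'a::field mat"
  assumes A: "A \<in> carrier_mat n n" and "invertible_mat A"
  shows "invertible_mat (dual_mat A)" and "dual_mat (dual_mat A) = A"
proof -
  have Ai: "mat_inv A \<in> carrier_mat n n" using mat_inv[OF assms] by simp
  have inv: "dual_mat A * transpose_mat A = 1\<^sub>m n"
    using transpose_mult[OF A Ai] mat_inv_right[OF assms] by (simp add: dual_mat_def)
  then show "invertible_mat (dual_mat A)" "dual_mat (dual_mat A) = A"
    using invertible_matI[OF _ _ inv] mat_inv_eqI[OF _ _ inv] Ai A by (auto simp: dual_mat_def)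
qed

lemma is_subfield_mat_inv:
  fixes A :: "'a::field mat"
  assumes E: "is_subfield E" and A: "A \<in> carrier_mat n n" and "invertible_mat A"
    and AE: "elements_mat A \<subseteq> E"
  shows "elements_mat (mat_inv A) \<subseteq> E"
proof -
  have "det A \<noteq> 0"
    using det_mult[OF A mat_inv_carrier[OF A]] mat_inv_right[OF A] assms by auto
  then have "A * (inverse (det A) \<cdot>\<^sub>m adj_mat A) = 1\<^sub>m n"
    using mult_smult_distrib[OF A adj_mat(1)[OF A]] adj_mat(2)[OF A] by (intro eq_matI) auto
  then have inv: "mat_inv A = inverse (det A) \<cdot>\<^sub>m adj_mat A"
    by (intro mat_inv_eqI[OF A]) (use adj_mat(1)[OF A] in auto)
  have "inverse (det A) * cofactor A j i \<in> E" for i j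
    using is_subfield_mult[OF E is_subfield_inverse[OF E is_subfield_det[OF E A AE]]
        is_subfield_cofactor[OF E A AE]] .
  then show ?thesis
    using A adj_mat(1)[OF A] unfolding inv
    by (intro elements_mat_subsetI[of _ n n]) (auto simp: adj_mat_def)
qed

lemma gen_field_elements_dual_mat:
  fixes P :: "'a::field mat"
  assumes P: "P \<in> carrier_mat n n" and "invertible_mat P"
  shows "gen_field K (elements_mat (dual_mat P)) = gen_field K (elements_mat P)"
proof -
  have "elements_mat (mat_inv A) \<subseteq> gen_field K (elements_mat A)"
    if "A \<in> carrier_mat n n" "invertible_mat A" for A :: "'a mat"
    using is_subfield_mat_inv[OF gen_field_is_subfield that] gen_field_upper by blast
  from this[OF assms] this[OF mat_inv_carrier[OF assms] invertible_mat_inv(1)[OF assms]]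
    invertible_mat_inv(2)[OF assms] show ?thesis
    unfolding dual_mat_def elements_mat_transpose by (intro gen_field_eqI) auto
qed

lemma qpow_mat_carrier: "A \<in> carrier_mat n m \<Longrightarrow> qpow_mat q A \<in> carrier_mat n m"
  unfolding qpow_mat_def carrier_mat_def by simp

lemma qpow_vec_carrier: "v \<in> carrier_vec n \<Longrightarrow> qpow_vec q v \<in> carrier_vec n"
  unfolding qpow_vec_def carrier_vec_def by simp

lemma qpow_mat_transpose: "qpow_mat q (transpose_mat A) = transpose_mat (qpow_mat q A)"
  by (rule eq_matI) (auto simp: qpow_mat_def)

lemma col_qpow_mat: "j < dim_col A \<Longrightarrow> col (qpow_mat q A) j = qpow_vec q (col A j)"
  by (rule eq_vecI) (auto simp: qpow_vec_def qpow_mat_def)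

lemma frob_solutionsD:
  "X \<in> frob_solutions q n C \<Longrightarrow> X \<in> carrier_vec n"
  "X \<in> frob_solutions q n C \<Longrightarrow> C *\<^sub>v qpow_vec q X = X"
  by (auto simp: frob_solutions_def)

lemma is_subfield_frob_splitting_field: "is_subfield (frob_splitting_field K q n C)"
  unfolding frob_splitting_field_def by (rule gen_field_is_subfield)

lemma frob_splitting_field_upper:
  "X \<in> frob_solutions q n C \<Longrightarrow> set\<^sub>v X \<subseteq> frob_splitting_field K q n C"
  using gen_field_upper unfolding frob_splitting_field_def by blast

lemma frob_splitting_field_least:
  assumes "is_subfield E" "K \<subseteq> E" "\<And>X. X \<in> frob_solutions q n C \<Longrightarrow> set\<^sub>v X \<subseteq> E"
  shows "frob_splitting_field K q n C \<subseteq> E"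
  unfolding frob_splitting_field_def using assms by (intro gen_field_least) auto

definition frob_fundamental_matrix :: "nat \<Rightarrow> nat \<Rightarrow> 'a::field mat \<Rightarrow> 'a mat \<Rightarrow> bool" where
  "frob_fundamental_matrix q n C P \<longleftrightarrow>
     P \<in> carrier_mat n n \<and> invertible_mat P \<and> C * qpow_mat q P = P"

lemma col_frob_fundamental_matrix:
  assumes "frob_fundamental_matrix q n C P" "C \<in> carrier_mat n n" "j < n"
  shows "col P j \<in> frob_solutions q n C"
proof -
  have P: "P \<in> carrier_mat n n" and CP: "C * qpow_mat q P = P"
    using assms(1) by (auto simp: frob_fundamental_matrix_def)
  have "col (C * qpow_mat q P) j = C *\<^sub>v col (qpow_mat q P) j"
    by (rule col_mult2[OF assms(2) qpow_mat_carrier[OF P] assms(3)])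
  also have "col (qpow_mat q P) j = qpow_vec q (col P j)" using P assms(3) by (simp add: col_qpow_mat)
  finally have "C *\<^sub>v qpow_vec q (col P j) = col (C * qpow_mat q P) j" ..
  then show ?thesis using P assms(3) CP by (simp add: frob_solutions_def)
qed

lemma frob_splitting_field_dim_0: "frob_splitting_field K q 0 C = gen_field K {}"
proof -
  have "(\<Union>X\<in>frob_solutions q 0 C. set\<^sub>v X) = {}" by (auto simp: frob_solutions_def vec_set_def)
  then show ?thesis by (simp add: frob_splitting_field_def)
qed

context
  fixes q k :: nat
  assumes char_prime: "prime CHAR('a::field)" and q_def: "q = CHAR('a) ^ k"
begin

lemma qpow_mat_mult:
  assumes A: "(A :: 'a mat) \<in> carrier_mat n m" and B: "B \<in> carrier_mat m r"
  shows "qpow_mat q (A * B) = qpow_mat q A * qpow_mat q B"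
proof (rule eq_matI)
  fix i j assume "i < dim_row (qpow_mat q A * qpow_mat q B)" "j < dim_col (qpow_mat q A * qpow_mat q B)"
  then have i: "i < n" and j: "j < r" using A B by (auto simp: qpow_mat_def)
  have "(\<Sum>l = 0..<m. A $$ (i,l) * B $$ (l,j)) ^ q = (\<Sum>l = 0..<m. A $$ (i,l) ^ q * B $$ (l,j) ^ q)"
    by (simp add: freshmans_dream_sum'[OF char_prime q_def] power_mult_distrib)
  then show "qpow_mat q (A * B) $$ (i,j) = (qpow_mat q A * qpow_mat q B) $$ (i,j)"
    using i j A B by (simp add: qpow_mat_def scalar_prod_def)
qed (use A B in \<open>auto simp: qpow_mat_def\<close>)

lemma qpow_mult_mat_vec:
  assumes A: "(A :: 'a mat) \<in> carrier_mat n m" and v: "v \<in> carrier_vec m"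
  shows "qpow_vec q (A *\<^sub>v v) = qpow_mat q A *\<^sub>v qpow_vec q v"
proof (rule eq_vecI)
  fix i assume "i < dim_vec (qpow_mat q A *\<^sub>v qpow_vec q v)"
  then have i: "i < n" using A by (auto simp: qpow_mat_def)
  have "(\<Sum>l = 0..<m. A $$ (i,l) * v $ l) ^ q = (\<Sum>l = 0..<m. A $$ (i,l) ^ q * v $ l ^ q)"
    by (simp add: freshmans_dream_sum'[OF char_prime q_def] power_mult_distrib)
  then show "qpow_vec q (A *\<^sub>v v) $ i = (qpow_mat q A *\<^sub>v qpow_vec q v) $ i"
    using i A v by (simp add: qpow_mat_def qpow_vec_def scalar_prod_def)
qed (use A v in \<open>auto simp: qpow_mat_def qpow_vec_def\<close>)

lemma qpow_one_mat: "qpow_mat q (1\<^sub>m n :: 'a mat) = 1\<^sub>m n"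
proof -
  have "q > 0" using char_prime q_def prime_gt_0_nat by simp
  then show ?thesis by (intro eq_matI) (auto simp: qpow_mat_def)
qed

lemma qpow_mat_inverse:
  assumes "(A :: 'a mat) \<in> carrier_mat n n" "B \<in> carrier_mat n n" "A * B = 1\<^sub>m n"
  shows "qpow_mat q A * qpow_mat q B = 1\<^sub>m n"
  using qpow_mat_mult[OF assms(1,2)] assms(3) qpow_one_mat by simp

lemma invertible_mat_gauge:
  fixes N B :: "'a mat"
  assumes N: "N \<in> carrier_mat n n" "invertible_mat N" and B: "B \<in> carrier_mat n n" "invertible_mat B"
  shows "invertible_mat (mat_inv N * B * qpow_mat q N)"
proof -
  note Ni = mat_inv[OF N] and Bi = mat_inv[OF B]
  note simps = assoc_mult_mat[of _ n n _ n _ n] mult_carrier_mat[of _ n n _ n] qpow_mat_carrier[of _ n n]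
    mult_mat_inverse_cancel[of _ n _ _ n]
  have qN: "qpow_mat q N * qpow_mat q (mat_inv N) = 1\<^sub>m n"
    by (rule qpow_mat_inverse[OF N(1) Ni(1,2)])
  have "mat_inv N * B * qpow_mat q N * (qpow_mat q (mat_inv N) * mat_inv B * N)
      = mat_inv N * (B * ((qpow_mat q N * qpow_mat q (mat_inv N)) * (mat_inv B * N)))"
    using N Ni B Bi by (simp add: simps)
  also have "\<dots> = 1\<^sub>m n" using N Ni B Bi unfolding qN by (simp add: simps)
  finally show ?thesis
    by (rule invertible_matI[rotated 2]) (use N Ni B Bi in \<open>simp_all add: simps\<close>)
qed

lemma frob_solutions_gauge:
  fixes T B D :: "'a mat"
  assumes T: "T \<in> carrier_mat n n" and B: "B \<in> carrier_mat n n" and D: "D \<in> carrier_mat n n"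
    and TB: "T * B = D * qpow_mat q T" and X: "X \<in> frob_solutions q n B"
  shows "T *\<^sub>v X \<in> frob_solutions q n D"
proof -
  note Xc = frob_solutionsD(1)[OF X]
  have qT: "qpow_mat q T \<in> carrier_mat n n" and qX: "qpow_vec q X \<in> carrier_vec n"
    using T Xc by (auto intro: qpow_mat_carrier qpow_vec_carrier)
  have "D *\<^sub>v qpow_vec q (T *\<^sub>v X) = (D * qpow_mat q T) *\<^sub>v qpow_vec q X"
    using D T Xc qT qX by (simp add: qpow_mult_mat_vec[OF T Xc])
  also have "\<dots> = T *\<^sub>v (B *\<^sub>v qpow_vec q X)"
    unfolding TB[symmetric] using T B qX by simp
  finally show ?thesis using T Xc frob_solutionsD(2)[OF X] by (simp add: frob_solutions_def)
qed

lemma frob_splitting_field_gauge_subset: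
  fixes T T' B D :: "'a mat"
  assumes T: "T \<in> carrier_mat n n" and T': "T' \<in> carrier_mat n n" and "T' * T = 1\<^sub>m n"
    and B: "B \<in> carrier_mat n n" and D: "D \<in> carrier_mat n n"
    and TB: "T * B = D * qpow_mat q T" and T'K: "elements_mat T' \<subseteq> K"
  shows "frob_splitting_field K q n B \<subseteq> frob_splitting_field K q n D"
proof (rule frob_splitting_field_least[OF is_subfield_frob_splitting_field])
  show "K \<subseteq> frob_splitting_field K q n D"
    using gen_field_upper unfolding frob_splitting_field_def by blast
  fix X assume X: "X \<in> frob_solutions q n B"
  have "X = (T' * T) *\<^sub>v X"
    using assms frob_solutionsD(1)[OF X] by simp
  also have "\<dots> = T' *\<^sub>v (T *\<^sub>v X)"
    using T T' frob_solutionsD(1)[OF X] by simp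
  also have "set\<^sub>v \<dots> \<subseteq> frob_splitting_field K q n D"
  proof (rule is_subfield_mult_mat_vec[OF is_subfield_frob_splitting_field T'])
    show "T *\<^sub>v X \<in> carrier_vec n" using T frob_solutionsD(1)[OF X] by simp
    show "elements_mat T' \<subseteq> frob_splitting_field K q n D"
      using T'K \<open>K \<subseteq> frob_splitting_field K q n D\<close> by blast
    show "set\<^sub>v (T *\<^sub>v X) \<subseteq> frob_splitting_field K q n D"
      by (rule frob_splitting_field_upper[OF frob_solutions_gauge[OF T B D TB X]])
  qed
  finally show "set\<^sub>v X \<subseteq> frob_splitting_field K q n D" .
qed

lemma frob_splitting_field_gauge:
  fixes N B :: "'a mat"
  assumes K: "is_subfield K" and N: "N \<in> carrier_mat n n" "invertible_mat N"
    and NK: "elements_mat N \<subseteq> K" and B: "B \<in> carrier_mat n n"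
  shows "frob_splitting_field K q n B = frob_splitting_field K q n (mat_inv N * B * qpow_mat q N)"
proof -
  note Ni = mat_inv[OF N]
  note simps = assoc_mult_mat[of _ n n _ n _ n] mult_carrier_mat[of _ n n _ n] qpow_mat_carrier[of _ n n]
    mult_mat_inverse_cancel[of _ n _ _ n]
  define D where "D = mat_inv N * B * qpow_mat q N"
  have qN: "qpow_mat q N * qpow_mat q (mat_inv N) = 1\<^sub>m n"
    by (rule qpow_mat_inverse[OF N(1) Ni(1,2)])
  have D: "D \<in> carrier_mat n n" using N Ni B by (simp add: D_def simps)
  have "frob_splitting_field K q n B \<subseteq> frob_splitting_field K q n D"
  proof (rule frob_splitting_field_gauge_subset[OF Ni(1) N(1) Ni(2) B D _ NK])
    have "D * qpow_mat q (mat_inv N) = mat_inv N * (B * (qpow_mat q N * qpow_mat q (mat_inv N)))"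
      using N Ni B by (simp add: D_def simps)
    then show "mat_inv N * B = D * qpow_mat q (mat_inv N)" using B Ni by (simp add: qN)
  qed
  moreover have "frob_splitting_field K q n D \<subseteq> frob_splitting_field K q n B"
  proof (rule frob_splitting_field_gauge_subset[OF N(1) Ni(1) Ni(3) D B _])
    show "N * D = B * qpow_mat q N" using N Ni B by (simp add: D_def simps)
    show "elements_mat (mat_inv N) \<subseteq> K" by (rule is_subfield_mat_inv[OF K N NK])
  qed
  ultimately show ?thesis unfolding D_def by blast
qed

lemma frob_solutions_fundamental_matrix:
  fixes C P :: "'a mat"
  assumes F: "frob_fundamental_matrix q n C P" and C: "C \<in> carrier_mat n n"
    and X: "X \<in> frob_solutions q n C"
  obtains c where "c \<in> carrier_vec n" "qpow_vec q c = c" "X = P *\<^sub>v c"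
proof
  have P: "P \<in> carrier_mat n n" "invertible_mat P" and CP: "C * qpow_mat q P = P"
    using F by (auto simp: frob_fundamental_matrix_def)
  note Pi = mat_inv[OF P] and Xc = frob_solutionsD(1)[OF X]
  define c where "c = mat_inv P *\<^sub>v X"
  show c: "c \<in> carrier_vec n" using Pi Xc by (simp add: c_def)
  show X_eq: "X = P *\<^sub>v c"
    using P Pi Xc by (simp add: c_def flip: assoc_mult_mat_vec)
  have "P *\<^sub>v qpow_vec q c = (C * qpow_mat q P) *\<^sub>v qpow_vec q c" by (simp add: CP)
  also have "\<dots> = C *\<^sub>v qpow_vec q X"
    unfolding assoc_mult_mat_vec[OF C qpow_mat_carrier[OF P(1)] qpow_vec_carrier[OF c]]
    using P c by (simp add: X_eq qpow_mult_mat_vec)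
  also have "\<dots> = P *\<^sub>v c" using frob_solutionsD(2)[OF X] X_eq by simp
  finally have "mat_inv P *\<^sub>v (P *\<^sub>v qpow_vec q c) = mat_inv P *\<^sub>v (P *\<^sub>v c)" by simp
  then show "qpow_vec q c = c"
    using P Pi c qpow_vec_carrier[OF c] by (simp flip: assoc_mult_mat_vec)
qed

lemma frob_splitting_field_fundamental_matrix:
  fixes C P :: "'a mat"
  assumes K: "is_subfield K" and Fq: "{x. x ^ q = x} \<subseteq> K"
    and F: "frob_fundamental_matrix q n C P" and C: "C \<in> carrier_mat n n"
  shows "frob_splitting_field K q n C = gen_field K (elements_mat P)"
  unfolding frob_splitting_field_def
proof (rule gen_field_eqI)
  have P: "P \<in> carrier_mat n n" using F by (simp add: frob_fundamental_matrix_def)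
  show "(\<Union>X\<in>frob_solutions q n C. set\<^sub>v X) \<subseteq> gen_field K (elements_mat P)"
  proof (intro UN_least)
    fix X assume "X \<in> frob_solutions q n C"
    then obtain c where c: "c \<in> carrier_vec n" "qpow_vec q c = c" and X: "X = P *\<^sub>v c"
      using frob_solutions_fundamental_matrix[OF F C] by blast
    have "set\<^sub>v c \<subseteq> K"
    proof
      fix x assume "x \<in> set\<^sub>v c"
      then obtain i where "i < n" "x = c $ i" using c(1) by (auto simp: vec_set_def)
      then have "x ^ q = x" using arg_cong[OF c(2), of "\<lambda>v. v $ i"] c(1) by (simp add: qpow_vec_def)
      then show "x \<in> K" using Fq by blast
    qed
    then show "set\<^sub>v X \<subseteq> gen_field K (elements_mat P)"
      unfolding X using gen_field_upper[of K "elements_mat P"]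
      by (intro is_subfield_mult_mat_vec[OF gen_field_is_subfield P c(1)]) auto
  qed
  show "elements_mat P \<subseteq> gen_field K (\<Union>X\<in>frob_solutions q n C. set\<^sub>v X)"
  proof (rule elements_mat_subsetI[OF P])
    fix i j assume "i < n" "j < n"
    then have "P $$ (i,j) \<in> set\<^sub>v (col P j)" and "col P j \<in> frob_solutions q n C"
      using P col_frob_fundamental_matrix[OF F C] by (auto simp: vec_set_def)
    then show "P $$ (i,j) \<in> gen_field K (\<Union>X\<in>frob_solutions q n C. set\<^sub>v X)"
      using gen_field_upper by blast
  qed
qed

lemma frob_fundamental_matrix_dual:
  fixes C P :: "'a mat"
  assumes F: "frob_fundamental_matrix q n C P" and C: "C \<in> carrier_mat n n" "invertible_mat C"
  shows "frob_fundamental_matrix q n (dual_mat C) (dual_mat P)"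
proof -
  have P: "P \<in> carrier_mat n n" "invertible_mat P" and CP: "C * qpow_mat q P = P"
    using F by (auto simp: frob_fundamental_matrix_def)
  note Pi = mat_inv[OF P] and Ci = mat_inv[OF C]
  note simps = assoc_mult_mat[of _ n n _ n _ n] mult_carrier_mat[of _ n n _ n] qpow_mat_carrier[of _ n n]
    mult_mat_inverse_cancel[of _ n _ _ n] left_mult_one_mat[of _ n n] right_mult_one_mat[of _ n n]
  have qP: "qpow_mat q P = mat_inv C * P"
    using CP C Ci P by (metis mult_mat_inverse_cancel qpow_mat_carrier)
  have qPi: "qpow_mat q (mat_inv P) * qpow_mat q P = 1\<^sub>m n"
    by (rule qpow_mat_inverse[OF Pi(1) P(1) Pi(3)])
  have "qpow_mat q (mat_inv P) = qpow_mat q (mat_inv P) * (qpow_mat q P * (mat_inv P * C))"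
    using P Pi C Ci by (simp add: qP simps)
  also have "\<dots> = (qpow_mat q (mat_inv P) * qpow_mat q P) * (mat_inv P * C)"
    using P Pi C Ci by (simp add: simps)
  also have "\<dots> = mat_inv P * C"
    using Pi C by (simp add: qPi simps)
  finally have qPi': "qpow_mat q (mat_inv P) = mat_inv P * C" .
  have "dual_mat C * qpow_mat q (dual_mat P) = transpose_mat (mat_inv P * C * mat_inv C)"
    unfolding transpose_mult[OF mult_carrier_mat[OF Pi(1) C(1)] Ci(1)]
    by (simp add: dual_mat_def qpow_mat_transpose qPi')
  also have "\<dots> = dual_mat P" using P Pi C Ci by (simp add: dual_mat_def simps)
  finally show ?thesis
    using invertible_dual_mat(1)[OF P] Pi by (simp add: frob_fundamental_matrix_def dual_mat_def)
qed

end

lemma card_roots_separable: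
  fixes p :: "'a::field poly"
  assumes "alg_closed TYPE('a)" and "p \<noteq> 0" and "\<And>x. poly p x = 0 \<Longrightarrow> poly (pderiv p) x \<noteq> 0"
  shows "card {x. poly p x = 0} = degree p"
  using assms(2,3)
proof (induction "degree p" arbitrary: p)
  case 0
  then obtain c where "p = [:c:]" "c \<noteq> 0" by (metis degree_0_id pCons_0_0)
  then show ?case by simp
next
  case (Suc d)
  obtain r where r: "poly p r = 0"
    using assms(1) Suc.hyps(2) unfolding alg_closed_def by (metis One_nat_def Suc_le_mono le0)
  then obtain g where pg: "p = [:-r, 1:] * g" using poly_eq_0_iff_dvd by (metis dvdE)
  have g0: "g \<noteq> 0" using Suc.prems(1) pg by auto
  have "degree p = Suc (degree g)" unfolding pg using g0 by (subst degree_mult_eq) auto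
  then have dg: "degree g = d" using Suc.hyps(2) by simp
  have pp: "poly p x = (x - r) * poly g x" for x by (simp add: pg algebra_simps)
  have "pderiv p = [:-r, 1:] * pderiv g + g"
    unfolding pg pderiv_mult by (simp add: pderiv_pCons)
  then have pd: "poly (pderiv p) x = poly g x + (x - r) * poly (pderiv g) x" for x
    by (simp only: poly_add poly_mult) (simp add: algebra_simps)
  have "card {x. poly g x = 0} = degree g"
  proof (rule Suc.hyps(1)[OF dg[symmetric] g0])
    fix x assume "poly g x = 0"
    then show "poly (pderiv g) x \<noteq> 0" using Suc.prems(2)[of x] pp pd by auto
  qed
  moreover have "poly g r \<noteq> 0" using Suc.prems(2)[OF r] pd[of r] by simp
  moreover have "{x. poly p x = 0} = insert r {x. poly g x = 0}" using pp by auto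
  ultimately show ?case using poly_roots_finite[OF g0] dg Suc.hyps(2) by simp
qed

lemma pderiv_sum: "pderiv (sum f A) = (\<Sum>x\<in>A. pderiv (f x))"
  by (induction A rule: infinite_finite_induct) (auto simp: pderiv_add)

definition linearized_poly :: "nat \<Rightarrow> nat \<Rightarrow> (nat \<Rightarrow> 'a::field) \<Rightarrow> 'a poly" where
  "linearized_poly q n a = monom 1 (q ^ n) - (\<Sum>l<n. monom (a l) (q ^ l))"

lemma poly_linearized_poly:
  "poly (linearized_poly q n a) x = x ^ (q ^ n) - (\<Sum>l<n. a l * x ^ (q ^ l))"
  by (simp add: linearized_poly_def poly_sum poly_monom)

lemma card_roots_linearized_poly:
  fixes a :: "nat \<Rightarrow> 'a::field"
  assumes "alg_closed TYPE('a)" and char_prime: "prime CHAR('a)" and q_def: "q = CHAR('a) ^ k"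
    and "k \<ge> 1" and "n \<ge> 1" and "a 0 \<noteq> 0"
  shows "card {x. poly (linearized_poly q n a) x = 0} = q ^ n"
proof -
  let ?L = "linearized_poly q n a"
  have q1: "q > 1"
    unfolding q_def using prime_gt_1_nat[OF char_prime] assms(4) by (intro one_less_power) auto
  then have inj: "q ^ l = q ^ m \<longleftrightarrow> l = m" for l m by simp
  have c: "coeff ?L (q ^ n) = 1" using inj by (simp add: linearized_poly_def coeff_sum)
  then have L0: "?L \<noteq> 0" by auto
  have "q ^ n \<le> degree ?L" using c by (intro le_degree) simp
  moreover have "degree ?L \<le> q ^ n"
    unfolding linearized_poly_def
    by (intro degree_diff_le degree_sum_le degree_monom_le)
       (use q1 in \<open>auto intro: order.trans[OF degree_monom_le]\<close>)
  ultimately have dL: "degree ?L = q ^ n" by linarith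
  have char_dvd: "(of_nat (q ^ l) :: 'a) = 0" if "l \<ge> 1" for l
  proof -
    have "0 < k * l" using assms(4) that by simp
    then have "CHAR('a) dvd q ^ l" by (simp add: q_def flip: power_mult)
    then show ?thesis using of_nat_eq_0_iff_char_dvd by blast
  qed
  have "pderiv (monom (a l) (q ^ l)) = (if l = 0 then [:a 0:] else 0)" for l
    using char_dvd[of l] by (auto simp: pderiv_monom monom_0)
  then have "(\<Sum>l<n. pderiv (monom (a l) (q ^ l))) = [:a 0:]"
    using assms(5) by simp
  moreover have "pderiv (monom (1::'a) (q ^ n)) = 0"
    using char_dvd[OF assms(5)] by (simp add: pderiv_monom)
  ultimately have "pderiv ?L = - [:a 0:]"
    unfolding linearized_poly_def pderiv_diff pderiv_sum by simp
  then have "card {x. poly ?L x = 0} = degree ?L"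
    using card_roots_separable[OF assms(1) L0] assms(6) by simp
  then show ?thesis using dL by simp
qed

definition moore_mat :: "nat \<Rightarrow> nat \<Rightarrow> (nat \<Rightarrow> 'a::field) \<Rightarrow> 'a mat" where
  "moore_mat q n z = mat n n (\<lambda>(i,j). z j ^ (q ^ i))"

lemma moore_mat_carrier: "moore_mat q n z \<in> carrier_mat n n"
  by (simp add: moore_mat_def)

text \<open>Expanding along the last column, the determinant is a q-polynomial in the new entry
  whose leading coefficient is the smaller Moore determinant, so it has at most q^n roots.\<close>

lemma det_moore_mat_Suc_nonzero:
  fixes z :: "nat \<Rightarrow> 'a::field"
  assumes q1: "q > 1" and d: "det (moore_mat q n z) \<noteq> 0" and R: "finite R" and cR: "q ^ n < card R"
  obtains x where "x \<in> R" "det (moore_mat q (Suc n) (z(n := x))) \<noteq> 0"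
proof -
  define c where "c i = cofactor (moore_mat q (Suc n) z) i n" for i
  have del: "mat_delete (moore_mat q (Suc n) (z(n := x))) i n = mat_delete (moore_mat q (Suc n) z) i n"
    for x i by (rule eq_matI) (auto simp: mat_delete_def moore_mat_def)
  have detx: "det (moore_mat q (Suc n) (z(n := x))) = (\<Sum>i<Suc n. c i * x ^ (q ^ i))" for x
  proof -
    have "det (moore_mat q (Suc n) (z(n := x)))
        = (\<Sum>i<Suc n. moore_mat q (Suc n) (z(n := x)) $$ (i,n) * cofactor (moore_mat q (Suc n) (z(n := x))) i n)"
      by (rule laplace_expansion_column) (auto simp: moore_mat_carrier)
    also have "\<dots> = (\<Sum>i<Suc n. c i * x ^ (q ^ i))"
    proof (intro sum.cong refl)
      fix i assume "i \<in> {..<Suc n}"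
      moreover have "cofactor (moore_mat q (Suc n) (z(n := x))) i n = c i"
        by (simp only: cofactor_def del c_def)
      ultimately show "moore_mat q (Suc n) (z(n := x)) $$ (i,n) * cofactor (moore_mat q (Suc n) (z(n := x))) i n
          = c i * x ^ (q ^ i)"
        by (simp add: moore_mat_def mult.commute)
    qed
    finally show ?thesis .
  qed
  define F where "F = (\<Sum>i<Suc n. monom (c i) (q ^ i))"
  have pF: "poly F x = det (moore_mat q (Suc n) (z(n := x)))" for x
    by (simp add: F_def poly_sum poly_monom detx)
  have inj: "q ^ l = q ^ m \<longleftrightarrow> l = m" for l m using q1 by simp
  have "mat_delete (moore_mat q (Suc n) z) n n = moore_mat q n z"
    by (rule eq_matI) (auto simp: mat_delete_def moore_mat_def)
  then have "coeff F (q ^ n) = det (moore_mat q n z)"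
    using inj by (simp add: F_def coeff_sum c_def cofactor_def)
  then have F0: "F \<noteq> 0" using d by auto
  have "degree F \<le> q ^ n"
    unfolding F_def
    by (intro degree_sum_le) (use q1 in \<open>auto intro: order.trans[OF degree_monom_le]\<close>)
  then have "card {x. poly F x = 0} < card R" using card_poly_roots_bound[OF F0] cR by linarith
  then have "\<not> R \<subseteq> {x. poly F x = 0}" using card_mono[OF poly_roots_finite[OF F0], of R] by linarith
  then show ?thesis using that pF by auto
qed

lemma moore_mat_det_nonzero_exists:
  fixes R :: "'a::field set"
  assumes "q > 1" and "finite R" and "q ^ n \<le> card R"
  shows "\<exists>z. (\<forall>j<n. z j \<in> R) \<and> det (moore_mat q n z) \<noteq> 0"
  using assms(3)
proof (induction n)
  case 0
  have "moore_mat q 0 (\<lambda>_. 0::'a) = 1\<^sub>m 0" by (rule eq_matI) (auto simp: moore_mat_def)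
  then show ?case by (intro exI[of _ "\<lambda>_. 0"]) simp
next
  case (Suc n)
  have "q ^ n < q ^ Suc n" using assms(1) by simp
  then have "q ^ n \<le> card R" using Suc.prems by linarith
  then obtain z where z: "\<forall>j<n. z j \<in> R" "det (moore_mat q n z) \<noteq> 0"
    using Suc.IH by blast
  obtain x where "x \<in> R" "det (moore_mat q (Suc n) (z(n := x))) \<noteq> 0"
    using det_moore_mat_Suc_nonzero[OF assms(1) z(2) assms(2)] \<open>q ^ n < q ^ Suc n\<close> Suc.prems by auto
  moreover have "\<forall>j<Suc n. (z(n := x)) j \<in> R" using \<open>x \<in> R\<close> z(1) by (auto simp: less_Suc_eq)
  ultimately show ?case by blast
qed

lemma qpow_moore_mat:
  assumes "n \<ge> 1" and roots: "\<And>j. j < n \<Longrightarrow> poly (linearized_poly q n a) (z j) = 0"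
  shows "qpow_mat q (moore_mat q n z) = transpose_mat (Delta_mat n a) * moore_mat q n z"
proof (rule eq_matI)
  fix i j assume "i < dim_row (transpose_mat (Delta_mat n a) * moore_mat q n z)"
    "j < dim_col (transpose_mat (Delta_mat n a) * moore_mat q n z)"
  then have i: "i < n" and j: "j < n" by (auto simp: Delta_mat_def moore_mat_def)
  have "(transpose_mat (Delta_mat n a) * moore_mat q n z) $$ (i,j)
      = (\<Sum>l = 0..<n. Delta_mat n a $$ (l,i) * z j ^ (q ^ l))"
    using i j by (simp add: scalar_prod_def Delta_mat_def moore_mat_def)
  also have "\<dots> = z j ^ (q ^ Suc i)"
  proof (cases "i = n - 1")
    case True
    then have "(\<Sum>l = 0..<n. Delta_mat n a $$ (l,i) * z j ^ (q ^ l)) = (\<Sum>l<n. a l * z j ^ (q ^ l))"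
      by (intro sum.cong) (auto simp: Delta_mat_def)
    also have "\<dots> = z j ^ (q ^ n)"
      using roots[OF j] by (simp add: poly_linearized_poly)
    finally show ?thesis using True assms(1) by simp
  next
    case False
    then have "(\<Sum>l = 0..<n. Delta_mat n a $$ (l,i) * z j ^ (q ^ l))
        = (\<Sum>l = 0..<n. if l = Suc i then z j ^ (q ^ l) else 0)"
      using i by (intro sum.cong refl) (simp add: Delta_mat_def)
    then show ?thesis using False i by simp
  qed
  also have "\<dots> = qpow_mat q (moore_mat q n z) $$ (i,j)"
    using i j by (simp add: qpow_mat_def moore_mat_def power_mult[symmetric] mult.commute)
  finally show "qpow_mat q (moore_mat q n z) $$ (i,j)
      = (transpose_mat (Delta_mat n a) * moore_mat q n z) $$ (i,j)" ..
qed (auto simp: qpow_mat_def moore_mat_def Delta_mat_def)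

lemma Delta_mat_coeff_0_nonzero:
  assumes "n \<ge> 1" and "invertible_mat (Delta_mat n a)"
  shows "a 0 \<noteq> 0"
proof
  assume a0: "a 0 = 0"
  have D: "Delta_mat n a \<in> carrier_mat n n" by (simp add: Delta_mat_def)
  note Di = mat_inv[OF D assms(2)]
  have "(Delta_mat n a * mat_inv (Delta_mat n a)) $$ (0,0)
      = (\<Sum>l = 0..<n. Delta_mat n a $$ (0,l) * mat_inv (Delta_mat n a) $$ (l,0))"
    using D Di(1) assms(1) by (simp add: scalar_prod_def)
  also have "\<dots> = 0" using a0 by (intro sum.neutral) (simp add: Delta_mat_def)
  finally show False using Di(2) assms(1) by simp
qed

lemma frob_fundamental_matrix_dual_Delta_mat:
  fixes a :: "nat \<Rightarrow> 'a::field"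
  assumes "alg_closed TYPE('a)" and "prime CHAR('a)" and "q = CHAR('a) ^ k" and "k \<ge> 1"
    and n: "n \<ge> 1" and D: "invertible_mat (Delta_mat n a)"
  obtains P where "frob_fundamental_matrix q n (dual_mat (Delta_mat n a)) P"
proof -
  define R where "R = {x. poly (linearized_poly q n a) x = 0}"
  have q1: "q > 1"
    unfolding assms(3) using prime_gt_1_nat[OF assms(2)] assms(4) by (intro one_less_power) auto
  have "card R = q ^ n"
    unfolding R_def using card_roots_linearized_poly Delta_mat_coeff_0_nonzero[OF n D] assms by blast
  moreover have "finite R" using \<open>card R = q ^ n\<close> q1 by (intro card_ge_0_finite) simp
  ultimately obtain z where z: "\<forall>j<n. z j \<in> R" and det: "det (moore_mat q n z) \<noteq> 0"
    using moore_mat_det_nonzero_exists[OF q1, of R n] by auto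
  have P: "invertible_mat (moore_mat q n z)"
    by (rule invertible_mat_det[OF moore_mat_carrier det])
  have Dc: "Delta_mat n a \<in> carrier_mat n n" by (simp add: Delta_mat_def)
  note Di = mat_inv[OF Dc D]
  have "qpow_mat q (moore_mat q n z) = transpose_mat (Delta_mat n a) * moore_mat q n z"
    using z by (intro qpow_moore_mat[OF n]) (simp add: R_def)
  then have "dual_mat (Delta_mat n a) * qpow_mat q (moore_mat q n z)
      = transpose_mat (mat_inv (Delta_mat n a)) * (transpose_mat (Delta_mat n a) * moore_mat q n z)"
    by (simp add: dual_mat_def)
  also have "\<dots> = (transpose_mat (mat_inv (Delta_mat n a)) * transpose_mat (Delta_mat n a)) * moore_mat q n z"
    by (rule assoc_mult_mat[symmetric]) (use Dc Di(1) moore_mat_carrier in auto)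
  also have "transpose_mat (mat_inv (Delta_mat n a)) * transpose_mat (Delta_mat n a) = 1\<^sub>m n"
    using transpose_mult[OF Dc Di(1)] Di(2) by simp
  also have "1\<^sub>m n * moore_mat q n z = moore_mat q n z"
    using moore_mat_carrier by (rule left_mult_one_mat)
  finally show ?thesis
    using that moore_mat_carrier P by (auto simp: frob_fundamental_matrix_def)
qed

theorem corollary4p4:
  fixes K :: "'a::field set" and q n k :: nat and B N :: "'a mat" and a :: "nat \<Rightarrow> 'a"
  assumes "alg_closed TYPE('a)"
    and "is_subfield K" and "infinite K"
    and "prime (CHAR('a))" and "k \<ge> 1" and "q = CHAR('a) ^ k"
    and "{x::'a. x ^ q = x} \<subseteq> K"
    and "B \<in> carrier_mat n n" and "invertible_mat B" and "elements_mat B \<subseteq> K"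
    and "N \<in> carrier_mat n n" and "invertible_mat N" and "elements_mat N \<subseteq> K"
    and "mat_inv N * B * qpow_mat q N = Delta_mat n a"
  shows "frob_splitting_field K q n B = frob_splitting_field K q n (dual_mat (Delta_mat n a))"
  \<comment> \<open>Neither the infinitude of K (which in the paper provides N) nor the entries of B are used.\<close>
proof (cases "n = 0")
  case True
  then show ?thesis by (simp add: frob_splitting_field_dim_0)
next
  case False
  then have n: "n \<ge> 1" by simp
  let ?D = "Delta_mat n a"
  have D: "?D \<in> carrier_mat n n" "invertible_mat ?D"
    using invertible_mat_gauge[OF assms(4,6,11,12,8,9)] unfolding assms(14) by (simp_all add: Delta_mat_def)
  obtain P where P: "frob_fundamental_matrix q n (dual_mat ?D) P"
    by (rule frob_fundamental_matrix_dual_Delta_mat[OF assms(1,4,6,5) n D(2)])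
  have Pc: "P \<in> carrier_mat n n" "invertible_mat P"
    using P by (auto simp: frob_fundamental_matrix_def)
  have dD: "dual_mat ?D \<in> carrier_mat n n" "invertible_mat (dual_mat ?D)"
    using invertible_dual_mat(1)[OF D] mat_inv_carrier[OF D] by (auto simp: dual_mat_def)
  have "frob_fundamental_matrix q n ?D (dual_mat P)"
    using frob_fundamental_matrix_dual[OF assms(4,6) P dD] invertible_dual_mat(2)[OF D] by simp
  then have "frob_splitting_field K q n ?D = gen_field K (elements_mat (dual_mat P))"
    by (rule frob_splitting_field_fundamental_matrix[OF assms(4,6,2,7) _ D(1)])
  also have "\<dots> = gen_field K (elements_mat P)"
    by (rule gen_field_elements_dual_mat[OF Pc])
  also have "\<dots> = frob_splitting_field K q n (dual_mat ?D)"
    by (rule frob_splitting_field_fundamental_matrix[OF assms(4,6,2,7) P dD(1), symmetric])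
  finally show ?thesis
    using frob_splitting_field_gauge[OF assms(4,6,2,11,12,13,8)] assms(14) by simp
qed

end
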